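(* Let $k\ge2$, let $X=\mathbb{P}^{n_1}\times\cdots\times\mathbb{P}^{n_k}$ (over $\mathbb{C}$) with $n_1=1$, and let $L=\mathcal{O}_X(d_1,\dots,d_k)$ with $d_i\ge1$ for all $i$. Then $\mathrm{s}_X(u)\le 2$ for all nonzero $u\in H^0(L)$, and equality holds for a general $u\in H^0(L)$.
   Context: Strength: for $u\in H^0(L)\setminus\{0\}$, $\mathrm{s}_X(u)$ is the minimal $r\ge1$ such that there exist line bundles $L_1,\dots,L_r,R_1,\dots,R_r$ on $X$, none isomorphic to $\mathcal{O}_X$, isomorphisms $\phi_i:L_i\otimes R_i\to L$, and sections $x_i\in H^0(L_i)$, $y_i\in H^0(R_i)$ with $u=\sum_i\phi_i(x_i\cdot y_i)$ (product of sections); $+\infty$ if none exists. *)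

theory Defs
  imports Complex_Main "HOL-Library.Poly_Mapping" "HOL-Library.Extended_Nat"
begin

text \<open>Multihomogeneous polynomials on X = P^{n_0} x ... x P^{n_{k-1}} (factors indexed 0..k-1).
  Variables are indexed by pairs (i,j), i < k the factor, j \<le> n i the homogeneous coordinate.\<close>

type_synonym mono = "(nat \<times> nat) \<Rightarrow>\<^sub>0 nat"
type_synonym cpoly = "mono \<Rightarrow>\<^sub>0 complex"

definition block_deg :: "(nat \<Rightarrow> nat) \<Rightarrow> mono \<Rightarrow> nat \<Rightarrow> nat" where
  "block_deg n m i = (\<Sum>j\<le>n i. Poly_Mapping.lookup m (i, j))"

definition mono_in :: "(nat \<Rightarrow> nat) \<Rightarrow> nat \<Rightarrow> mono \<Rightarrow> bool" where
  "mono_in n k m \<longleftrightarrow> Poly_Mapping.keys m \<subseteq> {(i, j). i < k \<and> j \<le> n i}"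

text \<open>H^0(X, O_X(a)) for a degree vector a in Z^k (only a 0 .. a (k-1) matter):
  multihomogeneous polynomials of multidegree a (only 0 if some a i < 0).\<close>
definition sections :: "(nat \<Rightarrow> nat) \<Rightarrow> nat \<Rightarrow> (nat \<Rightarrow> int) \<Rightarrow> cpoly set" where
  "sections n k a = {p. \<forall>m \<in> Poly_Mapping.keys p. mono_in n k m \<and> (\<forall>i<k. int (block_deg n m i) = a i)}"

text \<open>Pic X = Z^k via a \<mapsto> O_X(a); O_X(a) is trivial iff a = 0.\<close>
definition nontrivial_deg :: "nat \<Rightarrow> (nat \<Rightarrow> int) \<Rightarrow> bool" where
  "nontrivial_deg k a \<longleftrightarrow> (\<exists>i<k. a i \<noteq> 0)"

definition strength_decomp :: "(nat \<Rightarrow> nat) \<Rightarrow> nat \<Rightarrow> (nat \<Rightarrow> int) \<Rightarrow> cpoly \<Rightarrow> nat \<Rightarrow> bool" where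
  "strength_decomp n k d u r \<longleftrightarrow>
     (\<exists>(a :: nat \<Rightarrow> nat \<Rightarrow> int) (x :: nat \<Rightarrow> cpoly) (y :: nat \<Rightarrow> cpoly).
        (\<forall>t<r. nontrivial_deg k (a t) \<and> nontrivial_deg k (\<lambda>i. d i - a t i)
               \<and> x t \<in> sections n k (a t) \<and> y t \<in> sections n k (\<lambda>i. d i - a t i))
        \<and> u = (\<Sum>t<r. x t * y t))"

text \<open>Strength s_X(u): least r \<ge> 1 admitting a decomposition, \<infinity> if none (Inf {} = \<infinity> in enat).\<close>
definition strength :: "(nat \<Rightarrow> nat) \<Rightarrow> nat \<Rightarrow> (nat \<Rightarrow> int) \<Rightarrow> cpoly \<Rightarrow> enat" where
  "strength n k d u = Inf {enat r | r. r \<ge> 1 \<and> strength_decomp n k d u r}"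

text \<open>Polynomial functions on a coefficient space: a polynomial P whose variables are
  monomials, evaluated at a coefficient vector c.\<close>
definition eval_coord_poly :: "((mono \<Rightarrow>\<^sub>0 nat) \<Rightarrow>\<^sub>0 complex) \<Rightarrow> (mono \<Rightarrow> complex) \<Rightarrow> complex" where
  "eval_coord_poly P c = (\<Sum>e\<in>Poly_Mapping.keys P. Poly_Mapping.lookup P e * (\<Prod>v\<in>Poly_Mapping.keys e. c v ^ Poly_Mapping.lookup e v))"

end

theory Submission
  imports Defs "HOL-Library.FuncSet" "HOL-Library.Function_Algebras" "HOL-Computational_Algebra.Polynomial"
begin

text \<open>Since the first factor is \<open>\<P>\<^sup>1\<close> with coordinates \<open>s, t\<close>, every monomial of multidegree \<open>d\<close>
  is divisible by \<open>s\<close> or by \<open>t\<close>; hence every section is \<open>u = s A + t B\<close> and has strength at most 2.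

  The sections of strength 1 form the union, over the finitely many splittings \<open>d = a + (d - a)\<close>
  into nontrivial degrees, of the images of the multiplication maps
  \<open>H\<^sup>0(a) \<times> H\<^sup>0(d - a) \<rightarrow> H\<^sup>0(d)\<close>. Counting monomials gives
  \<open>h\<^sup>0(a) + h\<^sup>0(d - a) \<le> h\<^sup>0(d)\<close>, so every source has projective dimension at most
  \<open>h\<^sup>0(d) - 2\<close>. Consequently, for large \<open>e\<close> the forms of degree \<open>e\<close> on \<open>H\<^sup>0(d)\<close> outnumber the
  bihomogeneous forms of bidegree \<open>(e, e)\<close> on all sources together, and since pulling back a form
  along a bilinear map lands in the span of the latter, some nonzero form \<open>P\<close> pulls back to zero
  along every multiplication map. Where \<open>P\<close> does not vanish the strength is exactly 2.\<close>

section \<open>Linear relations and polynomial identities\<close>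

lemma (in vector_space) nontrivial_relation_if_card_span_lt:
  assumes "finite S" "finite T" "card T < card S" "Phi ` S \<subseteq> span T"
  shows "\<exists>u. (\<exists>i\<in>S. u i \<noteq> 0) \<and> (\<Sum>i\<in>S. u i *s Phi i) = 0"
proof (cases "inj_on Phi S")
  case False
  then obtain i j where ij: "i \<in> S" "j \<in> S" "i \<noteq> j" "Phi i = Phi j"
    unfolding inj_on_def by blast
  define u :: "_ \<Rightarrow> 'a" where "u l = (if l = i then 1 else if l = j then -1 else 0)" for l
  have "(\<Sum>l\<in>S. u l *s Phi l) = (\<Sum>l\<in>{i, j}. u l *s Phi l)"
    using assms(1) ij by (intro sum.mono_neutral_right) (auto simp: u_def)
  also have "\<dots> = 0"
    using ij by (simp add: u_def)
  finally show ?thesis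
    using ij by (intro exI[of _ u]) (auto simp: u_def)
next
  case True
  have "dependent (Phi ` S)"
  proof (rule ccontr)
    assume "independent (Phi ` S)"
    then have "card (Phi ` S) \<le> card T"
      using independent_span_bound[OF assms(2) _ assms(4)] by blast
    then show False
      using assms(3) card_image[OF True] by simp
  qed
  then obtain w i where w: "i \<in> S" "w (Phi i) \<noteq> 0" "(\<Sum>v\<in>Phi ` S. w v *s v) = 0"
    using dependent_finite[of "Phi ` S"] assms(1) by auto
  have "(\<Sum>l\<in>S. w (Phi l) *s Phi l) = 0"
    using w(3) by (simp add: sum.reindex[OF True])
  with w(1,2) show ?thesis
    by (intro exI[of _ "\<lambda>l. w (Phi l)"]) auto
qed

global_interpretation fun_vs: vector_space "\<lambda>c (f :: 'x \<Rightarrow> complex) x. c * f x"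
  by unfold_locales (auto simp: fun_eq_iff algebra_simps)

lemma sum_fun_apply: "(\<Sum>i\<in>A. f i) x = (\<Sum>i\<in>A. f i x)"
  by (induction A rule: infinite_finite_induct) auto

lemma prod_fun_apply: "(\<Prod>i\<in>I. f i) x = (\<Prod>i\<in>I. f i x)"
  by (induction I rule: infinite_finite_induct) auto

lemma power_fun_apply: "(f ^ n) x = f x ^ n"
  by (induction n) auto

lemma coeffs_eq_0_if_sum_powers_eq_0:
  fixes c :: "nat \<Rightarrow> complex"
  assumes "finite J" "\<And>z. (\<Sum>j\<in>J. c j * z ^ j) = 0" "j \<in> J"
  shows "c j = 0"
proof -
  define p where "p = (\<Sum>j\<in>J. monom (c j) j)"
  have "poly p = (\<lambda>_. 0)"
    using assms(2) by (simp add: p_def poly_sum poly_monom fun_eq_iff)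
  then have "coeff p j = 0"
    using poly_all_0_iff_0 by (metis coeff_0)
  then show ?thesis
    using assms(1,3) by (simp add: p_def coeff_sum)
qed

lemma sum_poly_fun_insert_eq:
  fixes S :: "('v \<Rightarrow> nat) set" and lam :: "('v \<Rightarrow> nat) \<Rightarrow> complex"
  assumes "finite X" "x \<notin> X" "finite S"
  shows "(\<Sum>\<beta>\<in>S. lam \<beta> * (\<Prod>v\<in>insert x X. (c(x := z)) v ^ \<beta> v))
    = (\<Sum>j\<in>(\<lambda>\<beta>. \<beta> x) ` S. (\<Sum>\<beta>\<in>{\<beta>\<in>S. \<beta> x = j}. lam \<beta> * (\<Prod>v\<in>X. c v ^ \<beta> v)) * z ^ j)"
proof -
  have "(\<Prod>v\<in>insert x X. (c(x := z)) v ^ \<beta> v) = z ^ \<beta> x * (\<Prod>v\<in>X. c v ^ \<beta> v)"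
    for \<beta> :: "'v \<Rightarrow> nat"
  proof -
    have "(\<Prod>v\<in>X. (c(x := z)) v ^ \<beta> v) = (\<Prod>v\<in>X. c v ^ \<beta> v)"
      using assms(2) by (intro prod.cong) auto
    then show ?thesis
      using assms(1,2) by simp
  qed
  then have "(\<Sum>\<beta>\<in>{\<beta>\<in>S. \<beta> x = j}. lam \<beta> * (\<Prod>v\<in>X. c v ^ \<beta> v)) * z ^ j
      = (\<Sum>\<beta>\<in>{\<beta>\<in>S. \<beta> x = j}. lam \<beta> * (\<Prod>v\<in>insert x X. (c(x := z)) v ^ \<beta> v))" for j
    unfolding sum_distrib_right by (intro sum.cong refl) (simp add: mult_ac del: fun_upd_apply)
  moreover have "(\<Sum>j\<in>(\<lambda>\<beta>. \<beta> x) ` S. \<Sum>\<beta>\<in>{\<beta>\<in>S. \<beta> x = j}. lam \<beta> * (\<Prod>v\<in>insert x X. (c(x := z)) v ^ \<beta> v))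
      = (\<Sum>\<beta>\<in>S. lam \<beta> * (\<Prod>v\<in>insert x X. (c(x := z)) v ^ \<beta> v))"
    by (rule sum.group) (use assms(3) in auto)
  ultimately show ?thesis
    by (simp del: fun_upd_apply)
qed

lemma inj_on_restrict_fibre:
  assumes "inj_on (\<lambda>\<beta>. restrict \<beta> (insert x X)) S"
  shows "inj_on (\<lambda>\<beta>. restrict \<beta> X) {\<beta>\<in>S. \<beta> x = j}"
proof (rule inj_onI)
  fix \<beta> \<gamma> assume \<beta>\<gamma>: "\<beta> \<in> {\<beta>\<in>S. \<beta> x = j}" "\<gamma> \<in> {\<beta>\<in>S. \<beta> x = j}"
    and eq: "restrict \<beta> X = restrict \<gamma> X"
  have "restrict \<beta> (insert x X) = restrict \<gamma> (insert x X)"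
  proof
    fix v show "restrict \<beta> (insert x X) v = restrict \<gamma> (insert x X) v"
      using \<beta>\<gamma> fun_cong[OF eq, of v] by (cases "v = x") auto
  qed
  then show "\<beta> = \<gamma>"
    using inj_onD[OF assms, of \<beta> \<gamma>] \<beta>\<gamma> by simp
qed

text \<open>Induction on the variables: grouping the terms by their exponent of \<open>x\<close> turns the polynomial
  into a polynomial in \<open>c x\<close> whose coefficients are again polynomial functions in fewer variables.\<close>
lemma coeffs_eq_0_if_poly_fun_eq_0:
  fixes S :: "('v \<Rightarrow> nat) set" and lam :: "('v \<Rightarrow> nat) \<Rightarrow> complex"
  assumes "finite X" "finite S" "inj_on (\<lambda>\<alpha>. restrict \<alpha> X) S"
    and "\<And>c. (\<Sum>\<alpha>\<in>S. lam \<alpha> * (\<Prod>v\<in>X. c v ^ \<alpha> v)) = 0"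
    and "\<alpha> \<in> S"
  shows "lam \<alpha> = 0"
  using assms
proof (induction X arbitrary: S \<alpha> rule: finite_induct)
  case empty
  then have "S = {\<alpha>}"
    by (auto simp: inj_on_def restrict_def)
  then show ?case
    using empty.prems(3) by simp
next
  case (insert x X)
  let ?S' = "{\<beta>\<in>S. \<beta> x = \<alpha> x}"
  have fibre_zero: "(\<Sum>\<beta>\<in>?S'. lam \<beta> * (\<Prod>v\<in>X. c v ^ \<beta> v)) = 0" for c
  proof (rule coeffs_eq_0_if_sum_powers_eq_0)
    show "(\<Sum>j\<in>(\<lambda>\<beta>. \<beta> x) ` S. (\<Sum>\<beta>\<in>{\<beta>\<in>S. \<beta> x = j}. lam \<beta> * (\<Prod>v\<in>X. c v ^ \<beta> v)) * z ^ j) = 0"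
      for z
      using insert.prems(3)[of "c(x := z)"] sum_poly_fun_insert_eq[OF insert.hyps insert.prems(1)]
      by simp
  qed (use insert.prems(1,4) in auto)
  show ?case
  proof (rule insert.IH[of ?S' \<alpha>])
    show "finite ?S'" "\<alpha> \<in> ?S'"
      using insert.prems(1,4) by simp_all
    show "inj_on (\<lambda>\<beta>. restrict \<beta> X) ?S'"
      by (rule inj_on_restrict_fibre[OF insert.prems(2)])
  qed (rule fibre_zero)
qed

section \<open>Exponent vectors\<close>

definition deg_exps :: "'a set \<Rightarrow> nat \<Rightarrow> ('a \<Rightarrow> nat) set" where
  "deg_exps X p = {\<alpha>. (\<forall>x. x \<notin> X \<longrightarrow> \<alpha> x = 0) \<and> sum \<alpha> X = p}"

definition single_exp :: "'a \<Rightarrow> nat \<Rightarrow> 'a \<Rightarrow> nat" where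
  "single_exp x p = (\<lambda>y. if y = x then p else 0)"

lemma single_exp_in_deg_exps: "finite X \<Longrightarrow> x \<in> X \<Longrightarrow> single_exp x p \<in> deg_exps X p"
  by (simp add: deg_exps_def single_exp_def)

lemma add_in_deg_exps: "\<alpha> \<in> deg_exps X p \<Longrightarrow> \<beta> \<in> deg_exps X q \<Longrightarrow> \<alpha> + \<beta> \<in> deg_exps X (p + q)"
  by (simp add: deg_exps_def sum.distrib)

lemma deg_exps_le: "\<alpha> \<in> deg_exps X p \<Longrightarrow> finite X \<Longrightarrow> \<alpha> x \<le> p"
  unfolding deg_exps_def by (cases "x \<in> X") (auto intro: member_le_sum[of x X \<alpha>, simplified])

lemma inj_on_restrict_deg_exps: "inj_on (\<lambda>\<alpha>. restrict \<alpha> X) (deg_exps X p)"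
proof (rule inj_onI)
  fix \<alpha> \<beta> assume \<alpha>\<beta>: "\<alpha> \<in> deg_exps X p" "\<beta> \<in> deg_exps X p"
    and eq: "restrict \<alpha> X = restrict \<beta> X"
  show "\<alpha> = \<beta>"
  proof
    fix x show "\<alpha> x = \<beta> x"
      using \<alpha>\<beta> fun_cong[OF eq, of x] by (cases "x \<in> X") (auto simp: deg_exps_def)
  qed
qed

lemma finite_deg_exps:
  assumes "finite X"
  shows "finite (deg_exps X p)"
proof -
  have "(\<lambda>\<alpha>. restrict \<alpha> X) ` deg_exps X p \<subseteq> PiE X (\<lambda>_. {0..p})"
    using deg_exps_le[OF _ assms] by auto
  moreover have "finite (PiE X (\<lambda>_. {0..p}))"
    using assms by (simp add: finite_PiE)
  ultimately show ?thesis
    using finite_subset finite_imageD[OF _ inj_on_restrict_deg_exps] by blast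
qed

lemma inj_on_restrict_remove_deg_exps:
  assumes "finite X" "x \<in> X"
  shows "inj_on (\<lambda>\<alpha>. restrict \<alpha> (X - {x})) (deg_exps X p)"
proof (rule inj_onI)
  fix \<alpha> \<beta> assume \<alpha>\<beta>: "\<alpha> \<in> deg_exps X p" "\<beta> \<in> deg_exps X p"
    and eq: "restrict \<alpha> (X - {x}) = restrict \<beta> (X - {x})"
  have off_x: "\<alpha> y = \<beta> y" if "y \<in> X - {x}" for y
    using fun_cong[OF eq, of y] that by simp
  have "\<alpha> x + sum \<alpha> (X - {x}) = \<beta> x + sum \<beta> (X - {x})"
    using \<alpha>\<beta> assms by (simp add: deg_exps_def sum.remove)
  moreover have "sum \<alpha> (X - {x}) = sum \<beta> (X - {x})"
    using off_x by (rule sum.cong[OF refl])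
  ultimately have "\<alpha> x = \<beta> x"
    by simp
  show "\<alpha> = \<beta>"
  proof
    fix y show "\<alpha> y = \<beta> y"
      using off_x \<alpha>\<beta> \<open>\<alpha> x = \<beta> x\<close> by (cases "y \<in> X"; cases "y = x") (auto simp: deg_exps_def)
  qed
qed

lemma card_deg_exps_le:
  assumes "finite X"
  shows "card (deg_exps X p) \<le> (p + 1) ^ (card X - 1)"
proof (cases "X = {}")
  case True
  then have "deg_exps X p \<subseteq> {\<lambda>_. 0}"
    by (auto simp: deg_exps_def)
  from card_mono[OF _ this] True show ?thesis
    by simp
next
  case False
  then obtain x where x: "x \<in> X" by blast
  have "(\<lambda>\<alpha>. restrict \<alpha> (X - {x})) ` deg_exps X p \<subseteq> PiE (X - {x}) (\<lambda>_. {0..p})"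
    using deg_exps_le[OF _ assms] by (intro image_subsetI, subst restrict_PiE_iff) simp
  then have "card (deg_exps X p) \<le> card (PiE (X - {x}) (\<lambda>_. {0..p}))"
    using inj_on_restrict_remove_deg_exps[OF assms x] assms
    by (intro card_inj_on_le) (auto simp: finite_PiE)
  also have "\<dots> = (p + 1) ^ (card X - 1)"
    using assms x by (simp add: card_PiE)
  finally show ?thesis .
qed

text \<open>Any entries in \<open>{0..c}\<close> off \<open>x\<close> extend to an exponent vector of degree
  \<open>c (|X| - 1)\<close> by filling up the entry at \<open>x\<close>.\<close>
lemma card_deg_exps_ge:
  assumes "finite X" "x \<in> X"
  shows "(c + 1) ^ (card X - 1) \<le> card (deg_exps X (c * (card X - 1)))"
proof -
  let ?Y = "X - {x}" and ?e = "c * (card X - 1)"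
  define extend where "extend \<beta> y = (if y \<in> ?Y then \<beta> y else if y = x then ?e - sum \<beta> ?Y else 0)"
    for \<beta> :: "'a \<Rightarrow> nat" and y
  have sum_le: "sum \<beta> ?Y \<le> ?e" if "\<beta> \<in> PiE ?Y (\<lambda>_. {0..c})" for \<beta>
    using sum_mono[of ?Y \<beta> "\<lambda>_. c"] that assms by (auto simp: PiE_iff mult.commute)
  then have "extend ` PiE ?Y (\<lambda>_. {0..c}) \<subseteq> deg_exps X ?e"
  proof (intro image_subsetI)
    fix \<beta> assume "\<beta> \<in> PiE ?Y (\<lambda>_. {0..c})"
    moreover have "sum (extend \<beta>) X = extend \<beta> x + sum (extend \<beta>) ?Y"
      using assms by (simp add: sum.remove)
    moreover have "sum (extend \<beta>) ?Y = sum \<beta> ?Y"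
      by (intro sum.cong) (auto simp: extend_def)
    ultimately show "extend \<beta> \<in> deg_exps X ?e"
      using sum_le assms by (simp add: deg_exps_def extend_def)
  qed
  moreover have "inj_on extend (PiE ?Y (\<lambda>_. {0..c}))"
    by (rule inj_onI, rule PiE_ext, assumption+) (metis extend_def)
  ultimately have "card (PiE ?Y (\<lambda>_. {0..c})) \<le> card (deg_exps X ?e)"
    using finite_deg_exps[OF assms(1)] by (intro card_inj_on_le)
  then show ?thesis
    using assms by (simp add: card_PiE)
qed

lemma card_deg_exps_pos: "finite X \<Longrightarrow> X \<noteq> {} \<Longrightarrow> 0 < card (deg_exps X p)"
  using single_exp_in_deg_exps finite_deg_exps by (metis card_gt_0_iff empty_iff ex_in_conv)

lemma two_le_card_deg_exps:
  assumes "finite X" "x \<in> X" "y \<in> X" "x \<noteq> y" "p \<noteq> 0"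
  shows "2 \<le> card (deg_exps X p)"
proof -
  have "single_exp x p \<noteq> single_exp y p"
    using assms by (auto simp: single_exp_def fun_eq_iff)
  moreover have "{single_exp x p, single_exp y p} \<subseteq> deg_exps X p"
    using assms by (simp add: single_exp_in_deg_exps)
  ultimately show ?thesis
    using card_mono[OF finite_deg_exps[OF assms(1)]] by (metis card_2_iff)
qed

lemma eq_single_exp_if_le:
  assumes "\<alpha> \<in> deg_exps X p" "finite X" "y \<in> X" "p \<le> \<alpha> y"
  shows "\<alpha> = single_exp y p"
proof -
  have "\<alpha> y + sum \<alpha> (X - {y}) = p"
    using assms(1-3) by (simp add: deg_exps_def sum.remove)
  then have "\<alpha> y = p" "sum \<alpha> (X - {y}) = 0"
    using assms(4) by linarith+
  then have "\<forall>z\<in>X - {y}. \<alpha> z = 0"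
    using assms(2) by simp
  show ?thesis
  proof
    fix z show "\<alpha> z = single_exp y p z"
      using assms(1) \<open>\<alpha> y = p\<close> \<open>\<forall>z\<in>X - {y}. \<alpha> z = 0\<close>
      by (cases "z = y"; cases "z \<in> X") (auto simp: deg_exps_def single_exp_def)
  qed
qed

text \<open>Shifting the degree-\<open>p\<close> vectors by \<open>q\<close> at \<open>x\<close> and the degree-\<open>q\<close> vectors by \<open>p\<close> at \<open>y\<close>
  gives two families of degree \<open>p + q\<close> meeting only in \<open>p\<close> at \<open>y\<close> plus \<open>q\<close> at \<open>x\<close>.\<close>
lemma card_deg_exps_add_le:
  assumes "finite X" "x \<in> X" "y \<in> X" "x \<noteq> y"
  shows "card (deg_exps X p) + card (deg_exps X q) \<le> card (deg_exps X (p + q)) + 1"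
proof -
  let ?A = "(\<lambda>\<alpha>. \<alpha> + single_exp x q) ` deg_exps X p"
  let ?B = "(\<lambda>\<beta>. \<beta> + single_exp y p) ` deg_exps X q"
  have card_A: "card ?A = card (deg_exps X p)" and card_B: "card ?B = card (deg_exps X q)"
    by (intro card_image inj_onI; simp)+
  have "?A \<subseteq> deg_exps X (p + q)" "?B \<subseteq> deg_exps X (q + p)"
    using assms by (auto intro: add_in_deg_exps single_exp_in_deg_exps)
  then have "?A \<union> ?B \<subseteq> deg_exps X (p + q)"
    by (simp add: add.commute)
  then have "card (?A \<union> ?B) \<le> card (deg_exps X (p + q))"
    by (intro card_mono finite_deg_exps assms(1))
  moreover have "?A \<inter> ?B \<subseteq> {single_exp y p + single_exp x q}"
  proof
    fix \<gamma> assume "\<gamma> \<in> ?A \<inter> ?B"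
    then obtain \<alpha> \<beta> where \<alpha>: "\<alpha> \<in> deg_exps X p" and \<beta>: "\<beta> \<in> deg_exps X q"
      and \<gamma>: "\<gamma> = \<alpha> + single_exp x q" "\<gamma> = \<beta> + single_exp y p" by blast
    have "\<alpha> y = \<beta> y + p"
      using fun_cong[OF \<gamma>(1), of y] fun_cong[OF \<gamma>(2), of y] assms(4)
      by (simp add: single_exp_def)
    then have "\<alpha> = single_exp y p"
      using eq_single_exp_if_le[OF \<alpha> assms(1,3)] by simp
    with \<gamma> show "\<gamma> \<in> {single_exp y p + single_exp x q}"
      by simp
  qed
  from card_mono[OF _ this] have "card (?A \<inter> ?B) \<le> 1"
    by simp
  moreover have "card ?A + card ?B = card (?A \<union> ?B) + card (?A \<inter> ?B)"
    using finite_deg_exps[OF assms(1)] by (intro card_Un_Int) auto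
  ultimately show ?thesis
    using card_A card_B by linarith
qed

lemma prod_power_single_exp: "finite X \<Longrightarrow> x \<in> X \<Longrightarrow> (\<Prod>y\<in>X. g y ^ single_exp x p y) = g x ^ p"
  by (simp add: single_exp_def prod.delta' if_distrib[of "power _"] cong: if_cong)

lemma mult_power_lt_power:
  fixes N K c :: nat
  assumes "2 \<le> N" "c = K * (N - 1) ^ (N - 2) + 1"
  shows "K * (c * (N - 1) + 1) ^ (N - 2) < (c + 1) ^ (N - 1)"
proof -
  have "c * (N - 1) + 1 \<le> c * (N - 1) + (N - 1)"
    using assms(1) by simp
  also have "\<dots> = (c + 1) * (N - 1)"
    using add_mult_distrib[of c 1 "N - 1"] by simp
  finally have "(c * (N - 1) + 1) ^ (N - 2) \<le> ((c + 1) * (N - 1)) ^ (N - 2)"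
    by (rule power_mono) simp
  also have "\<dots> = (N - 1) ^ (N - 2) * (c + 1) ^ (N - 2)"
    by (subst power_mult_distrib) (rule mult.commute)
  finally have "K * (c * (N - 1) + 1) ^ (N - 2) \<le> (K * (N - 1) ^ (N - 2)) * (c + 1) ^ (N - 2)"
    by (simp add: mult.assoc mult_left_mono)
  also have "\<dots> < (c + 1) * (c + 1) ^ (N - 2)"
    using assms(2) by (intro mult_strict_right_mono) auto
  also have "\<dots> = (c + 1) ^ (N - 1)"
    using assms(1) by (simp flip: power_Suc add: Suc_diff_Suc numeral_2_eq_2)
  finally show ?thesis .
qed

section \<open>Multihomogeneous monomials\<close>

definition multideg_monos :: "(nat \<Rightarrow> nat) \<Rightarrow> nat \<Rightarrow> (nat \<Rightarrow> int) \<Rightarrow> mono set" where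
  "multideg_monos n k a = {m. mono_in n k m \<and> (\<forall>i<k. int (block_deg n m i) = a i)}"

lemma sections_iff_keys: "p \<in> sections n k a \<longleftrightarrow> Poly_Mapping.keys p \<subseteq> multideg_monos n k a"
  by (auto simp: sections_def multideg_monos_def)

lemma multideg_monos_cong: "(\<And>i. i < k \<Longrightarrow> a i = b i) \<Longrightarrow> multideg_monos n k a = multideg_monos n k b"
  by (simp add: multideg_monos_def)

lemma multideg_monos_eq_empty: "i < k \<Longrightarrow> a i < 0 \<Longrightarrow> multideg_monos n k a = {}"
  by (force simp: multideg_monos_def)

lemma lookup_eq_0_if_not_var:
  "mono_in n k m \<Longrightarrow> \<not> (i < k \<and> j \<le> n i) \<Longrightarrow> Poly_Mapping.lookup m (i, j) = 0"
  by (auto simp: mono_in_def in_keys_iff)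

text \<open>A monomial of multidegree \<open>a\<close> is the same as a choice, for each factor, of an exponent
  vector of degree \<open>a i\<close> in the \<open>n i + 1\<close> coordinates of that factor.\<close>
definition mono_blocks :: "nat \<Rightarrow> mono \<Rightarrow> nat \<Rightarrow> nat \<Rightarrow> nat" where
  "mono_blocks k m = (\<lambda>i\<in>{..<k}. \<lambda>j. Poly_Mapping.lookup m (i, j))"

lemma inj_on_mono_blocks: "inj_on (mono_blocks k) (multideg_monos n k a)"
proof (rule inj_onI)
  fix m m' assume m: "m \<in> multideg_monos n k a" and m': "m' \<in> multideg_monos n k a"
    and eq: "mono_blocks k m = mono_blocks k m'"
  show "m = m'"
  proof (rule poly_mapping_eqI)
    fix x :: "nat \<times> nat"
    obtain i j where x: "x = (i, j)" by (cases x)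
    show "Poly_Mapping.lookup m x = Poly_Mapping.lookup m' x"
    proof (cases "i < k \<and> j \<le> n i")
      case True
      then show ?thesis
        using fun_cong[OF fun_cong[OF eq, of i], of j] x by (simp add: mono_blocks_def)
    next
      case False
      then show ?thesis
        using m m' x lookup_eq_0_if_not_var[of n k _ i j] by (simp add: multideg_monos_def)
    qed
  qed
qed

lemma mono_blocks_in_PiE:
  assumes "m \<in> multideg_monos n k a"
  shows "mono_blocks k m \<in> PiE {..<k} (\<lambda>i. deg_exps {..n i} (nat (a i)))"
  unfolding mono_blocks_def
proof (subst restrict_PiE_iff, intro ballI)
  fix i assume i: "i \<in> {..<k}"
  have "mono_in n k m" and deg: "int (block_deg n m i) = a i"
    using assms i by (auto simp: multideg_monos_def)
  then have "\<forall>j. j \<notin> {..n i} \<longrightarrow> Poly_Mapping.lookup m (i, j) = 0"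
    using lookup_eq_0_if_not_var by auto
  moreover have "block_deg n m i = nat (a i)"
    using deg by (metis nat_int)
  ultimately show "(\<lambda>j. Poly_Mapping.lookup m (i, j)) \<in> deg_exps {..n i} (nat (a i))"
    by (simp add: deg_exps_def block_deg_def)
qed

lemma PiE_subset_image_mono_blocks:
  assumes "\<forall>i<k. 0 \<le> a i"
  shows "PiE {..<k} (\<lambda>i. deg_exps {..n i} (nat (a i))) \<subseteq> mono_blocks k ` multideg_monos n k a"
proof
  fix F assume F: "F \<in> PiE {..<k} (\<lambda>i. deg_exps {..n i} (nat (a i)))"
  define f where "f = (\<lambda>(i, j). if i < k then F i j else 0)"
  have F_outside: "F i j = 0" if "i < k" "\<not> j \<le> n i" for i j
    using F that by (auto simp: PiE_iff deg_exps_def)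
  have supp: "{x. f x \<noteq> 0} \<subseteq> Sigma {..<k} (\<lambda>i. {..n i})"
    using F_outside by (auto simp: f_def split: if_splits) (metis less_irrefl)
  then have "finite {x. f x \<noteq> 0}"
    by (rule finite_subset) auto
  then have lookup_m: "Poly_Mapping.lookup (Abs_poly_mapping f) = f"
    by simp
  have "mono_in n k (Abs_poly_mapping f)"
    unfolding mono_in_def using supp by (auto simp: in_keys_iff lookup_m)
  moreover have "int (block_deg n (Abs_poly_mapping f) i) = a i" if "i < k" for i
  proof -
    have "(\<Sum>j\<le>n i. F i j) = nat (a i)"
      using F that by (auto simp: PiE_iff deg_exps_def)
    then show ?thesis
      unfolding block_deg_def lookup_m using that assms by (simp add: f_def)
  qed
  ultimately have m: "Abs_poly_mapping f \<in> multideg_monos n k a"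
    by (simp add: multideg_monos_def)
  have "mono_blocks k (Abs_poly_mapping f) = F"
    by (rule PiE_ext[OF mono_blocks_in_PiE[OF m] F]) (simp add: mono_blocks_def lookup_m, simp add: f_def)
  with m show "F \<in> mono_blocks k ` multideg_monos n k a"
    by blast
qed

lemma bij_betw_mono_blocks:
  "\<forall>i<k. 0 \<le> a i \<Longrightarrow>
    bij_betw (mono_blocks k) (multideg_monos n k a) (PiE {..<k} (\<lambda>i. deg_exps {..n i} (nat (a i))))"
  by (rule bij_betw_imageI[OF inj_on_mono_blocks])
    (use mono_blocks_in_PiE PiE_subset_image_mono_blocks in blast)

lemma finite_multideg_monos:
  assumes "\<forall>i<k. 0 \<le> a i"
  shows "finite (multideg_monos n k a)"
proof -
  have "finite (PiE {..<k} (\<lambda>i. deg_exps {..n i} (nat (a i))))"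
    by (simp add: finite_PiE finite_deg_exps)
  then show ?thesis
    using bij_betw_finite[OF bij_betw_mono_blocks[OF assms]] by simp
qed

lemma card_multideg_monos:
  "\<forall>i<k. 0 \<le> a i \<Longrightarrow> card (multideg_monos n k a) = (\<Prod>i<k. card (deg_exps {..n i} (nat (a i))))"
  using bij_betw_same_card[OF bij_betw_mono_blocks] by (simp add: card_PiE)

lemma mult_add_mult_le_mult:
  fixes a b c a' b' c' :: nat
  assumes "2 \<le> a" "1 \<le> b" "1 \<le> a'" "2 \<le> b'" "a + b \<le> c + 1" "a' + b' \<le> c' + 1"
  shows "a * a' + b * b' \<le> c * c'"
proof -
  obtain x y x' y' where "a = x + 2" "b = y + 1" "a' = x' + 1" "b' = y' + 2"
    using assms(1-4) by (metis add.commute le_Suc_ex one_add_one)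
  moreover have "(x + y + 2) * (x' + y' + 2) \<le> c * c'"
    using assms(5,6) calculation by (intro mult_mono) auto
  ultimately show ?thesis
    by (simp add: algebra_simps)
qed

lemma prod_add_prod_le_prod:
  fixes u v w :: "'i \<Rightarrow> nat"
  assumes "finite I" "i \<in> I" "j \<in> I" "i \<noteq> j"
    and bounds: "\<And>l. l \<in> I \<Longrightarrow> 1 \<le> u l \<and> 1 \<le> v l \<and> u l + v l \<le> w l + 1"
    and "2 \<le> u i" "2 \<le> v j"
  shows "prod u I + prod v I \<le> prod w I"
proof -
  let ?R = "I - {i} - {j}"
  have split: "prod f I = f i * f j * prod f ?R" for f :: "'i \<Rightarrow> nat"
    using assms(1-4) by (simp add: prod.remove mult.assoc)
  have rest: "prod u ?R \<le> prod w ?R" "prod v ?R \<le> prod w ?R"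
    using bounds by (intro prod_mono; force)+
  have "prod u I + prod v I = u i * u j * prod u ?R + v i * v j * prod v ?R"
    by (simp add: split)
  also have "\<dots> \<le> u i * u j * prod w ?R + v i * v j * prod w ?R"
    using rest by (intro add_mono mult_left_mono) simp_all
  also have "\<dots> = (u i * u j + v i * v j) * prod w ?R"
    by (simp add: algebra_simps)
  also have "\<dots> \<le> w i * w j * prod w ?R"
    using mult_add_mult_le_mult assms(6,7) bounds[OF assms(2)] bounds[OF assms(3)]
    by (intro mult_right_mono) simp_all
  also have "\<dots> = prod w I"
    by (simp add: split)
  finally show ?thesis .
qed

definition split_degs :: "nat \<Rightarrow> (nat \<Rightarrow> int) \<Rightarrow> (nat \<Rightarrow> int) set" where
  "split_degs k d = {a \<in> PiE {..<k} (\<lambda>i. {0..d i}). nontrivial_deg k a \<and> nontrivial_deg k (\<lambda>i. d i - a i)}"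

lemma finite_split_degs: "finite (split_degs k d)"
  by (rule finite_subset[of _ "PiE {..<k} (\<lambda>i. {0..d i})"]) (auto simp: split_degs_def finite_PiE)

lemma card_multideg_monos_pos: "\<forall>i<k. 0 \<le> a i \<Longrightarrow> 0 < card (multideg_monos n k a)"
  by (simp add: card_multideg_monos card_deg_exps_pos)

lemma two_le_card_multideg_monos:
  assumes "i < k" "1 \<le> n i" "\<forall>l<k. 0 \<le> a l" "a i \<noteq> 0"
  shows "2 \<le> card (multideg_monos n k a)"
proof -
  have "card (multideg_monos n k a) = card (deg_exps {..n i} (nat (a i)))
      * (\<Prod>l\<in>{..<k} - {i}. card (deg_exps {..n l} (nat (a l))))"
    using assms(1,3) by (simp add: card_multideg_monos prod.remove)
  moreover have "2 \<le> card (deg_exps {..n i} (nat (a i)))"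
    using assms by (intro two_le_card_deg_exps[of _ 0 "n i"]) auto
  moreover have "1 \<le> (\<Prod>l\<in>{..<k} - {i}. card (deg_exps {..n l} (nat (a l))))"
    by (intro prod_ge_1) (simp add: Suc_le_eq card_deg_exps_pos)
  ultimately show ?thesis
    by (metis mult_le_mono nat_mult_1_right)
qed

lemma exists_distinct_nonzero_factors:
  assumes "2 \<le> k" "\<forall>i<k. 1 \<le> d i" "nontrivial_deg k a" "nontrivial_deg k (\<lambda>i. d i - a i)"
  obtains p q where "p < k" "q < k" "p \<noteq> q" "a p \<noteq> 0" "d q - a q \<noteq> 0"
proof -
  obtain i where i: "i < k" "a i \<noteq> 0"
    using assms(3) by (auto simp: nontrivial_deg_def)
  obtain j where j: "j < k" "d j - a j \<noteq> 0"
    using assms(4) by (auto simp: nontrivial_deg_def)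
  define l where "l = (if i = 0 then 1 else 0 :: nat)"
  have l: "l < k" "l \<noteq> i"
    using assms(1) by (auto simp: l_def)
  show ?thesis
  proof (cases "i = j")
    case False
    then show ?thesis
      using that[of i j] i j by blast
  next
    case True
    show ?thesis
    proof (cases "a l = 0")
      case True
      then have "d l - a l \<noteq> 0"
        using assms(2) l by auto
      then show ?thesis
        using that[of i l] i l by auto
    next
      case False
      then show ?thesis
        using that[of l j] \<open>i = j\<close> j l by auto
    qed
  qed
qed

text \<open>In each factor \<open>\<P>\<^sup>m\<close>, \<open>m \<ge> 1\<close>, the monomial counts satisfy \<open>u + v \<le> w + 1\<close>; the deficit
  of \<open>1\<close> is recovered from two distinct factors in which \<open>a\<close>, resp. \<open>d - a\<close>, is nonzero.\<close>
lemma card_multideg_monos_split_le: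
  assumes "2 \<le> k" "\<forall>i<k. 1 \<le> n i" "\<forall>i<k. 1 \<le> d i" "a \<in> split_degs k d"
  shows "card (multideg_monos n k a) + card (multideg_monos n k (\<lambda>i. d i - a i))
    \<le> card (multideg_monos n k d)"
proof -
  define u where "u i = card (deg_exps {..n i} (nat (a i)))" for i
  define v where "v i = card (deg_exps {..n i} (nat (d i - a i)))" for i
  define w where "w i = card (deg_exps {..n i} (nat (d i)))" for i
  have a: "\<forall>i<k. 0 \<le> a i \<and> a i \<le> d i" "nontrivial_deg k a" "nontrivial_deg k (\<lambda>i. d i - a i)"
    using assms(4) by (auto simp: split_degs_def PiE_iff)
  have bounds: "1 \<le> u l \<and> 1 \<le> v l \<and> u l + v l \<le> w l + 1" if "l \<in> {..<k}" for l
  proof -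
    have "nat (d l) = nat (a l) + nat (d l - a l)"
      using a(1) that by auto
    then have "u l + v l \<le> w l + 1"
      unfolding u_def v_def w_def using assms(2) that
      by (metis card_deg_exps_add_le atMost_iff finite_atMost le_zero_eq lessThan_iff zero_le
          zero_neq_one)
    then show ?thesis
      by (simp add: u_def v_def Suc_le_eq card_deg_exps_pos)
  qed
  obtain p q where pq: "p < k" "q < k" "p \<noteq> q" "a p \<noteq> 0" "d q - a q \<noteq> 0"
    using exists_distinct_nonzero_factors[OF assms(1,3) a(2,3)] by blast
  have "2 \<le> u p"
    unfolding u_def using assms(2) a(1) pq by (intro two_le_card_deg_exps[of _ 0 "n p"]) auto
  moreover have "2 \<le> v q"
    unfolding v_def using assms(2) a(1) pq by (intro two_le_card_deg_exps[of _ 0 "n q"]) auto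
  ultimately have "prod u {..<k} + prod v {..<k} \<le> prod w {..<k}"
    by (intro prod_add_prod_le_prod[OF _ _ _ pq(3) bounds]) (use pq in auto)
  moreover have "\<forall>i<k. 0 \<le> d i"
    using assms(3) by force
  ultimately show ?thesis
    using a(1) by (simp add: u_def v_def w_def card_multideg_monos)
qed

section \<open>Strength at most two\<close>

lemma poly_mapping_eq_sum_single:
  "u = (\<Sum>m\<in>Poly_Mapping.keys u. Poly_Mapping.single m (Poly_Mapping.lookup u m))"
  by (rule poly_mapping_eqI) (simp add: lookup_sum lookup_single when_def in_keys_iff)

lemma keys_sum_single_subset:
  "(\<And>m. m \<in> A \<Longrightarrow> f m \<in> B) \<Longrightarrow> Poly_Mapping.keys (\<Sum>m\<in>A. Poly_Mapping.single (f m) (c m)) \<subseteq> B"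
  using keys_sum[of "\<lambda>m. Poly_Mapping.single (f m) (c m)" A] by (auto split: if_splits)

lemma single_add_diff_single:
  fixes m :: "'v \<Rightarrow>\<^sub>0 nat"
  assumes "e \<le> Poly_Mapping.lookup m x"
  shows "Poly_Mapping.single x e + (m - Poly_Mapping.single x e) = m"
  by (rule poly_mapping_eqI) (use assms in \<open>auto simp: lookup_add lookup_minus lookup_single when_def\<close>)

lemma split_by_two_vars:
  fixes u :: "('v \<Rightarrow>\<^sub>0 nat) \<Rightarrow>\<^sub>0 'c::comm_semiring_1"
  assumes "\<And>m. m \<in> Poly_Mapping.keys u \<Longrightarrow> 0 < Poly_Mapping.lookup m x \<or> 0 < Poly_Mapping.lookup m y"
  obtains A B where
    "u = Poly_Mapping.single (Poly_Mapping.single x 1) 1 * A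
       + Poly_Mapping.single (Poly_Mapping.single y 1) 1 * B"
    "Poly_Mapping.keys A \<subseteq> {m - Poly_Mapping.single x 1 | m.
       m \<in> Poly_Mapping.keys u \<and> 0 < Poly_Mapping.lookup m x}"
    "Poly_Mapping.keys B \<subseteq> {m - Poly_Mapping.single y 1 | m.
       m \<in> Poly_Mapping.keys u \<and> 0 < Poly_Mapping.lookup m y}"
proof -
  define K where "K = {m \<in> Poly_Mapping.keys u. 0 < Poly_Mapping.lookup m x}"
  define L where "L = Poly_Mapping.keys u - K"
  define A where "A = (\<Sum>m\<in>K. Poly_Mapping.single (m - Poly_Mapping.single x 1) (Poly_Mapping.lookup u m))"
  define B where "B = (\<Sum>m\<in>L. Poly_Mapping.single (m - Poly_Mapping.single y 1) (Poly_Mapping.lookup u m))"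
  have y_in_L: "0 < Poly_Mapping.lookup m y" if "m \<in> L" for m
    using assms[of m] that by (auto simp: L_def K_def)
  have "Poly_Mapping.single (Poly_Mapping.single x 1) 1 * A = (\<Sum>m\<in>K. Poly_Mapping.single m (Poly_Mapping.lookup u m))"
    unfolding A_def sum_distrib_left mult_single by (intro sum.cong refl) (simp add: K_def single_add_diff_single)
  moreover have "Poly_Mapping.single (Poly_Mapping.single y 1) 1 * B = (\<Sum>m\<in>L. Poly_Mapping.single m (Poly_Mapping.lookup u m))"
    unfolding B_def sum_distrib_left mult_single by (intro sum.cong refl) (simp add: y_in_L Suc_le_eq single_add_diff_single)
  ultimately have "Poly_Mapping.single (Poly_Mapping.single x 1) 1 * A + Poly_Mapping.single (Poly_Mapping.single y 1) 1 * B
      = (\<Sum>m\<in>K. Poly_Mapping.single m (Poly_Mapping.lookup u m))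
        + (\<Sum>m\<in>L. Poly_Mapping.single m (Poly_Mapping.lookup u m))"
    by simp
  also have "\<dots> = u"
    using sum.union_disjoint[of K L "\<lambda>m. Poly_Mapping.single m (Poly_Mapping.lookup u m)"]
    by (simp add: K_def L_def Un_absorb1 flip: poly_mapping_eq_sum_single)
  finally have "u = Poly_Mapping.single (Poly_Mapping.single x 1) 1 * A
      + Poly_Mapping.single (Poly_Mapping.single y 1) 1 * B" ..
  moreover have "Poly_Mapping.keys A \<subseteq> {m - Poly_Mapping.single x 1 | m.
      m \<in> Poly_Mapping.keys u \<and> 0 < Poly_Mapping.lookup m x}"
    unfolding A_def by (rule keys_sum_single_subset) (auto simp: K_def)
  moreover have "Poly_Mapping.keys B \<subseteq> {m - Poly_Mapping.single y 1 | m.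
      m \<in> Poly_Mapping.keys u \<and> 0 < Poly_Mapping.lookup m y}"
    unfolding B_def by (rule keys_sum_single_subset) (use y_in_L in \<open>auto simp: L_def\<close>)
  ultimately show ?thesis
    by (rule that)
qed

definition deg_unit :: "nat \<Rightarrow> nat \<Rightarrow> int" where
  "deg_unit i l = (if l = i then 1 else 0)"

lemma block_deg_add: "block_deg n (p + q) i = block_deg n p i + block_deg n q i"
  by (simp add: block_deg_def lookup_add sum.distrib)

lemma block_deg_single: "j \<le> n i \<Longrightarrow> int (block_deg n (Poly_Mapping.single (i, j) 1) l) = deg_unit i l"
  by (cases "l = i") (simp_all add: block_deg_def deg_unit_def lookup_single when_def)

lemma var_in_sections:
  "i < k \<Longrightarrow> j \<le> n i \<Longrightarrow> Poly_Mapping.single (Poly_Mapping.single (i, j) 1) 1 \<in> sections n k (deg_unit i)"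
  using block_deg_single[of j n i] by (simp add: sections_iff_keys multideg_monos_def mono_in_def)

lemma minus_var_in_multideg_monos:
  assumes "m \<in> multideg_monos n k a" "j \<le> n i" "0 < Poly_Mapping.lookup m (i, j)"
  shows "m - Poly_Mapping.single (i, j) 1 \<in> multideg_monos n k (\<lambda>l. a l - deg_unit i l)"
proof -
  let ?s = "Poly_Mapping.single (i, j) 1"
  have "block_deg n m l = block_deg n ?s l + block_deg n (m - ?s) l" for l
    using block_deg_add[of n ?s "m - ?s" l] single_add_diff_single[of 1 m "(i, j)"] assms(3) by simp
  moreover have "Poly_Mapping.keys (m - ?s) \<subseteq> Poly_Mapping.keys m"
    by (auto simp: in_keys_iff lookup_minus)
  ultimately show ?thesis
    using assms(1,2) by (auto simp: multideg_monos_def mono_in_def block_deg_single[symmetric])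
qed

lemma nontrivial_deg_unit:
  assumes "2 \<le> k" "1 \<le> d 1"
  shows "nontrivial_deg k (deg_unit 0)" "nontrivial_deg k (\<lambda>i. d i - deg_unit 0 i)"
  using assms by (auto simp: nontrivial_deg_def deg_unit_def intro!: exI[of _ 1])

lemma first_factor_coord_pos:
  assumes "m \<in> multideg_monos n k d" "0 < k" "n 0 = 1" "0 < d 0"
  shows "0 < Poly_Mapping.lookup m (0, 0) \<or> 0 < Poly_Mapping.lookup m (0, 1)"
proof -
  have "int (block_deg n m 0) = d 0"
    using assms(1,2) by (simp add: multideg_monos_def)
  moreover have "block_deg n m 0 = Poly_Mapping.lookup m (0, 0) + Poly_Mapping.lookup m (0, 1)"
    using assms(3) by (simp add: block_deg_def)
  ultimately show ?thesis
    using assms(4) by linarith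
qed

text \<open>On \<open>\<P>\<^sup>1 \<times> \<dots>\<close> every monomial of positive degree in the first factor is divisible by
  one of its two coordinates \<open>s, t\<close>, so \<open>u = s A + t B\<close>.\<close>
lemma strength_decomp_two:
  assumes "2 \<le> k" "n 0 = 1" "\<forall>i<k. 1 \<le> d i" "u \<in> sections n k d"
  shows "strength_decomp n k d u 2"
proof -
  let ?x = "Poly_Mapping.single (Poly_Mapping.single (0::nat, 0::nat) 1) (1::complex)"
  let ?y = "Poly_Mapping.single (Poly_Mapping.single (0::nat, 1::nat) 1) (1::complex)"
  let ?b = "\<lambda>l. d l - deg_unit 0 l"
  have keys_u: "Poly_Mapping.keys u \<subseteq> multideg_monos n k d"
    using assms(4) by (simp add: sections_iff_keys)
  have "0 < Poly_Mapping.lookup m (0, 0) \<or> 0 < Poly_Mapping.lookup m (0, 1)"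
    if "m \<in> Poly_Mapping.keys u" for m
    using first_factor_coord_pos[of m n k d] keys_u that assms(1,2) assms(3)[rule_format, of 0] by auto
  then obtain A B where u: "u = ?x * A + ?y * B"
    and keys_A: "Poly_Mapping.keys A \<subseteq> {m - Poly_Mapping.single (0, 0) 1 | m.
       m \<in> Poly_Mapping.keys u \<and> 0 < Poly_Mapping.lookup m (0, 0)}"
    and keys_B: "Poly_Mapping.keys B \<subseteq> {m - Poly_Mapping.single (0, 1) 1 | m.
       m \<in> Poly_Mapping.keys u \<and> 0 < Poly_Mapping.lookup m (0, 1)}"
    by (rule split_by_two_vars)
  have "Poly_Mapping.keys A \<subseteq> multideg_monos n k ?b"
    using keys_A keys_u minus_var_in_multideg_monos[of _ n k d 0 0] by auto
  moreover have "Poly_Mapping.keys B \<subseteq> multideg_monos n k ?b"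
    using keys_B keys_u minus_var_in_multideg_monos[of _ n k d 1 0] assms(2) by auto
  ultimately have "A \<in> sections n k ?b" "B \<in> sections n k ?b"
    by (simp_all add: sections_iff_keys)
  moreover have "?x \<in> sections n k (deg_unit 0)" "?y \<in> sections n k (deg_unit 0)"
    using var_in_sections[of 0 k 0 n] var_in_sections[of 0 k 1 n] assms(1,2) by auto
  moreover have "nontrivial_deg k (deg_unit 0)" "nontrivial_deg k ?b"
    using nontrivial_deg_unit assms(1) assms(3)[rule_format, of 1] by auto
  ultimately show ?thesis
    unfolding strength_decomp_def using u
    by (intro exI[of _ "\<lambda>_. deg_unit 0"] exI[of _ "\<lambda>t. if t = 0 then ?x else ?y"]
        exI[of _ "\<lambda>t. if t = 0 then A else B"]) (auto simp: numeral_2_eq_2 less_Suc_eq)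
qed

lemma strength_le: "strength_decomp n k d u r \<Longrightarrow> 1 \<le> r \<Longrightarrow> strength n k d u \<le> r"
  unfolding strength_def by (rule Inf_lower) blast

lemma two_le_strength: "\<not> strength_decomp n k d u 1 \<Longrightarrow> 2 \<le> strength n k d u"
  unfolding strength_def
  by (rule Inf_greatest) (auto simp: numeral_eq_enat dest: le_neq_implies_less)

section \<open>Images of bilinear maps lie in a hypersurface\<close>

locale bilinear_maps =
  fixes V :: "'v set" and T :: "'t set" and A :: "'t \<Rightarrow> 'a set" and B :: "'t \<Rightarrow> 'b set"
    and f :: "'t \<Rightarrow> 'v \<Rightarrow> 'a \<Rightarrow> 'b \<Rightarrow> complex"
  assumes finite_V: "finite V" and two_le_card_V: "2 \<le> card V" and finite_T: "finite T"
    and card_A_pos: "t \<in> T \<Longrightarrow> 0 < card (A t)" and card_B_pos: "t \<in> T \<Longrightarrow> 0 < card (B t)"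
    and card_A_B_le: "t \<in> T \<Longrightarrow> card (A t) + card (B t) \<le> card V"
begin

lemma finite_A: "t \<in> T \<Longrightarrow> finite (A t)" and finite_B: "t \<in> T \<Longrightarrow> finite (B t)"
  using card_A_pos card_B_pos card_ge_0_finite by blast+

definition bilinear_map :: "'t \<Rightarrow> ('a \<Rightarrow> complex) \<Rightarrow> ('b \<Rightarrow> complex) \<Rightarrow> 'v \<Rightarrow> complex" where
  "bilinear_map t G H v = (\<Sum>a\<in>A t. \<Sum>b\<in>B t. f t v a b * G a * H b)"

text \<open>Functions on the disjoint union over \<open>t \<in> T\<close> of the sources \<open>\<complex>\<^sup>A\<^sup>t \<times> \<complex>\<^sup>B\<^sup>t\<close>; a point
  \<open>(t, G, H)\<close> with \<open>t \<notin> T\<close> carries no information and all functions below vanish there.\<close>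
definition bimonomial ::
  "'t \<Rightarrow> ('a \<Rightarrow> nat) \<Rightarrow> ('b \<Rightarrow> nat) \<Rightarrow> 't \<times> ('a \<Rightarrow> complex) \<times> ('b \<Rightarrow> complex) \<Rightarrow> complex" where
  "bimonomial t \<alpha> \<beta> = (\<lambda>(s, G, H). if s = t then (\<Prod>a\<in>A t. G a ^ \<alpha> a) * (\<Prod>b\<in>B t. H b ^ \<beta> b) else 0)"

definition bimonomials :: "nat \<Rightarrow> nat \<Rightarrow> ('t \<times> ('a \<Rightarrow> complex) \<times> ('b \<Rightarrow> complex) \<Rightarrow> complex) set" where
  "bimonomials p q = (\<lambda>(t, \<alpha>, \<beta>). bimonomial t \<alpha> \<beta>) ` (SIGMA t:T. deg_exps (A t) p \<times> deg_exps (B t) q)"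

definition on_T :: "'t \<times> ('a \<Rightarrow> complex) \<times> ('b \<Rightarrow> complex) \<Rightarrow> complex" where
  "on_T = (\<lambda>(t, G, H). if t \<in> T then 1 else 0)"

definition coord :: "'v \<Rightarrow> 't \<times> ('a \<Rightarrow> complex) \<times> ('b \<Rightarrow> complex) \<Rightarrow> complex" where
  "coord v = (\<lambda>(t, G, H). if t \<in> T then bilinear_map t G H v else 0)"

definition pullback :: "('v \<Rightarrow> nat) \<Rightarrow> 't \<times> ('a \<Rightarrow> complex) \<times> ('b \<Rightarrow> complex) \<Rightarrow> complex" where
  "pullback \<alpha> = on_T * (\<Prod>v\<in>V. coord v ^ \<alpha> v)"

lemma pullback_apply:
  "t \<in> T \<Longrightarrow> pullback \<alpha> (t, G, H) = (\<Prod>v\<in>V. bilinear_map t G H v ^ \<alpha> v)"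
  by (simp add: pullback_def on_T_def coord_def prod_fun_apply power_fun_apply)

lemma bimonomial_mult:
  "bimonomial t \<alpha> \<beta> * bimonomial s \<alpha>' \<beta>' = (if s = t then bimonomial t (\<alpha> + \<alpha>') (\<beta> + \<beta>') else 0)"
  by (auto simp: fun_eq_iff bimonomial_def power_add prod.distrib mult_ac)

lemma bimonomials_mult_in_span:
  assumes "s \<in> bimonomials p q" "s' \<in> bimonomials p' q'"
  shows "s * s' \<in> fun_vs.span (bimonomials (p + p') (q + q'))"
proof -
  obtain t \<alpha> \<beta> where s: "t \<in> T" "\<alpha> \<in> deg_exps (A t) p" "\<beta> \<in> deg_exps (B t) q"
    "s = bimonomial t \<alpha> \<beta>"
    using assms(1) by (auto simp: bimonomials_def)
  obtain t' \<alpha>' \<beta>' where s': "\<alpha>' \<in> deg_exps (A t') p'" "\<beta>' \<in> deg_exps (B t') q'"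
    "s' = bimonomial t' \<alpha>' \<beta>'"
    using assms(2) by (auto simp: bimonomials_def)
  show ?thesis
  proof (cases "t' = t")
    case True
    then have "s * s' \<in> bimonomials (p + p') (q + q')"
      using s s' unfolding bimonomials_def
      by (auto simp: bimonomial_mult intro!: image_eqI[of _ _ "(t, \<alpha> + \<alpha>', \<beta> + \<beta>')"] add_in_deg_exps)
    then show ?thesis
      by (rule fun_vs.span_base)
  next
    case False
    then show ?thesis
      using s s' by (simp add: bimonomial_mult fun_vs.span_zero)
  qed
qed

lemma span_bimonomials_mult:
  assumes "g \<in> fun_vs.span (bimonomials p q)" "h \<in> fun_vs.span (bimonomials p' q')"
  shows "g * h \<in> fun_vs.span (bimonomials (p + p') (q + q'))"
proof -
  obtain S r where S: "finite S" "S \<subseteq> bimonomials p q" "g = (\<Sum>s\<in>S. (\<lambda>x. r s * s x))"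
    using assms(1) unfolding fun_vs.span_explicit by blast
  obtain S' r' where S': "finite S'" "S' \<subseteq> bimonomials p' q'" "h = (\<Sum>s\<in>S'. (\<lambda>x. r' s * s x))"
    using assms(2) unfolding fun_vs.span_explicit by blast
  have "g * h = (\<Sum>s\<in>S. \<Sum>s'\<in>S'. (\<lambda>x. (r s * r' s') * (s * s') x))"
    by (simp add: S(3) S'(3) fun_eq_iff sum_fun_apply sum_distrib_left sum_distrib_right mult_ac)
  also have "\<dots> \<in> fun_vs.span (bimonomials (p + p') (q + q'))"
    using S S' bimonomials_mult_in_span[of _ p q _ p' q', unfolded times_fun_def]
    by (intro fun_vs.span_sum fun_vs.span_scale) auto
  finally show ?thesis .
qed

lemma on_T_in_span: "on_T \<in> fun_vs.span (bimonomials 0 0)"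
proof -
  have "on_T = (\<Sum>t\<in>T. bimonomial t (\<lambda>_. 0) (\<lambda>_. 0))"
    using finite_T by (auto simp: fun_eq_iff sum_fun_apply on_T_def bimonomial_def)
  moreover have "bimonomial t (\<lambda>_. 0) (\<lambda>_. 0) \<in> bimonomials 0 0" if "t \<in> T" for t
    using that by (force simp: bimonomials_def deg_exps_def)
  ultimately show ?thesis
    by (metis fun_vs.span_base fun_vs.span_sum)
qed

lemma coord_in_span: "coord v \<in> fun_vs.span (bimonomials 1 1)"
proof -
  have "coord v = (\<Sum>t\<in>T. \<Sum>a\<in>A t. \<Sum>b\<in>B t.
      (\<lambda>x. f t v a b * bimonomial t (single_exp a 1) (single_exp b 1) x))"
  proof
    fix x :: "'t \<times> ('a \<Rightarrow> complex) \<times> ('b \<Rightarrow> complex)"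
    obtain s G H where x: "x = (s, G, H)" by (cases x)
    have "(\<Sum>a\<in>A t. \<Sum>b\<in>B t. f t v a b * bimonomial t (single_exp a 1) (single_exp b 1) x)
        = (if s = t then bilinear_map t G H v else 0)" if "t \<in> T" for t
      using that finite_A finite_B
      by (auto simp: x bimonomial_def bilinear_map_def prod_power_single_exp mult.assoc
          intro!: sum.cong)
    then show "coord v x = (\<Sum>t\<in>T. \<Sum>a\<in>A t. \<Sum>b\<in>B t.
        (\<lambda>x. f t v a b * bimonomial t (single_exp a 1) (single_exp b 1) x)) x"
      using finite_T by (simp add: sum_fun_apply x coord_def)
  qed
  moreover have "bimonomial t (single_exp a 1) (single_exp b 1) \<in> bimonomials 1 1"
    if "t \<in> T" "a \<in> A t" "b \<in> B t" for t a b
    using that finite_A finite_B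
    by (force simp: bimonomials_def intro: single_exp_in_deg_exps)
  ultimately show ?thesis
    by (simp add: fun_vs.span_sum fun_vs.span_scale fun_vs.span_base)
qed

lemma mult_coord_power_in_span:
  assumes "g \<in> fun_vs.span (bimonomials p p)"
  shows "g * coord v ^ j \<in> fun_vs.span (bimonomials (p + j) (p + j))"
proof (induction j)
  case 0
  then show ?case
    using assms by simp
next
  case (Suc j)
  have "(g * coord v ^ j) * coord v \<in> fun_vs.span (bimonomials (p + j + 1) (p + j + 1))"
    by (rule span_bimonomials_mult[OF Suc coord_in_span])
  moreover have "(g * coord v ^ j) * coord v = g * coord v ^ Suc j"
    by (simp only: power_Suc mult_ac)
  ultimately show ?case
    by (metis add_Suc_right Suc_eq_plus1)
qed

lemma pullback_in_span:
  assumes "\<alpha> \<in> deg_exps V e"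
  shows "pullback \<alpha> \<in> fun_vs.span (bimonomials e e)"
proof -
  have "on_T * (\<Prod>v\<in>W. coord v ^ \<alpha> v) \<in> fun_vs.span (bimonomials (sum \<alpha> W) (sum \<alpha> W))"
    if "finite W" for W
    using that
  proof (induction W rule: finite_induct)
    case empty
    then show ?case
      using on_T_in_span by simp
  next
    case (insert w W)
    have "on_T * (\<Prod>v\<in>insert w W. coord v ^ \<alpha> v) = (on_T * (\<Prod>v\<in>W. coord v ^ \<alpha> v)) * coord w ^ \<alpha> w"
      unfolding prod.insert[OF insert.hyps] by (simp only: mult_ac)
    moreover have "sum \<alpha> (insert w W) = sum \<alpha> W + \<alpha> w"
      using insert.hyps by simp
    ultimately show ?case
      using mult_coord_power_in_span[OF insert.IH] by presburger
  qed
  from this[OF finite_V] show ?thesis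
    using assms by (simp add: pullback_def deg_exps_def)
qed

lemma card_bimonomials_le: "card (bimonomials e e) \<le> card T * (e + 1) ^ (card V - 2)"
proof -
  let ?S = "SIGMA t:T. deg_exps (A t) e \<times> deg_exps (B t) e"
  have "card (bimonomials e e) \<le> card ?S"
    unfolding bimonomials_def using finite_T finite_A finite_B
    by (intro card_image_le finite_SigmaI finite_cartesian_product finite_deg_exps)
  also have "\<dots> = (\<Sum>t\<in>T. card (deg_exps (A t) e) * card (deg_exps (B t) e))"
    using finite_T finite_A finite_B
    by (subst card_SigmaI) (auto intro!: finite_deg_exps simp: card_cartesian_product)
  also have "\<dots> \<le> (\<Sum>t\<in>T. (e + 1) ^ (card V - 2))"
  proof (rule sum_mono)
    fix t assume t: "t \<in> T"
    have "card (deg_exps (A t) e) * card (deg_exps (B t) e)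
        \<le> (e + 1) ^ (card (A t) - 1) * (e + 1) ^ (card (B t) - 1)"
      using t finite_A finite_B by (intro mult_mono card_deg_exps_le) auto
    also have "\<dots> \<le> (e + 1) ^ (card V - 2)"
      using card_A_B_le[OF t] card_A_pos[OF t] card_B_pos[OF t]
      by (simp flip: power_add add: power_increasing)
    finally show "card (deg_exps (A t) e) * card (deg_exps (B t) e) \<le> (e + 1) ^ (card V - 2)" .
  qed
  also have "\<dots> = card T * (e + 1) ^ (card V - 2)"
    by simp
  finally show ?thesis .
qed

theorem exists_form_vanishing_on_images:
  obtains e lam where "\<exists>\<alpha>\<in>deg_exps V e. lam \<alpha> \<noteq> 0"
    and "\<And>t G H. t \<in> T \<Longrightarrow> (\<Sum>\<alpha>\<in>deg_exps V e. lam \<alpha> * (\<Prod>v\<in>V. bilinear_map t G H v ^ \<alpha> v)) = 0"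
proof -
  define N where "N = card V"
  define c where "c = card T * (N - 1) ^ (N - 2) + 1"
  define e where "e = c * (N - 1)"
  obtain v0 where "v0 \<in> V"
    using two_le_card_V by fastforce
  have "card (bimonomials e e) \<le> card T * (e + 1) ^ (N - 2)"
    using card_bimonomials_le by (simp add: N_def)
  also have "\<dots> < (c + 1) ^ (N - 1)"
    unfolding e_def using two_le_card_V by (intro mult_power_lt_power) (simp_all add: N_def c_def)
  also have "\<dots> \<le> card (deg_exps V e)"
    unfolding e_def N_def by (rule card_deg_exps_ge[OF finite_V \<open>v0 \<in> V\<close>])
  finally have "card (bimonomials e e) < card (deg_exps V e)" .
  moreover have "finite (bimonomials e e)"
    unfolding bimonomials_def using finite_T finite_A finite_B
    by (intro finite_imageI finite_SigmaI finite_cartesian_product finite_deg_exps)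
  ultimately obtain lam where nontrivial: "\<exists>\<alpha>\<in>deg_exps V e. lam \<alpha> \<noteq> 0"
    and relation: "(\<Sum>\<alpha>\<in>deg_exps V e. (\<lambda>x. lam \<alpha> * pullback \<alpha> x)) = 0"
    using fun_vs.nontrivial_relation_if_card_span_lt[OF finite_deg_exps[OF finite_V]]
      pullback_in_span by blast
  have "(\<Sum>\<alpha>\<in>deg_exps V e. lam \<alpha> * (\<Prod>v\<in>V. bilinear_map t G H v ^ \<alpha> v)) = 0"
    if "t \<in> T" for t G H
    using fun_cong[OF relation, of "(t, G, H)"] that by (simp add: sum_fun_apply pullback_apply)
  with nontrivial show ?thesis
    by (rule that)
qed

end

section \<open>Products of sections\<close>

lemma lookup_mult_eq_sum:
  fixes g h :: "'m::monoid_add \<Rightarrow>\<^sub>0 'c::semiring_1"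
  assumes "finite M" "finite M'" "Poly_Mapping.keys g \<subseteq> M" "Poly_Mapping.keys h \<subseteq> M'"
  shows "Poly_Mapping.lookup (g * h) v = (\<Sum>m\<in>M. \<Sum>m'\<in>M'.
    (if m + m' = v then 1 else 0) * Poly_Mapping.lookup g m * Poly_Mapping.lookup h m')"
proof -
  have inner: "(\<Sum>q. Poly_Mapping.lookup h q when v = m + q)
      = (\<Sum>m'\<in>M'. if m + m' = v then Poly_Mapping.lookup h m' else 0)" for m
  proof -
    have "(\<Sum>q. Poly_Mapping.lookup h q when v = m + q) = (\<Sum>q\<in>M'. Poly_Mapping.lookup h q when v = m + q)"
      by (rule Sum_any.expand_superset) (use assms in \<open>auto simp: in_keys_iff\<close>)
    then show ?thesis
      by (auto simp: when_def intro!: sum.cong)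
  qed
  have "Poly_Mapping.lookup (g * h) v
      = (\<Sum>m. Poly_Mapping.lookup g m * (\<Sum>m'\<in>M'. if m + m' = v then Poly_Mapping.lookup h m' else 0))"
    by (simp add: lookup_mult inner)
  also have "\<dots> = (\<Sum>m\<in>M. Poly_Mapping.lookup g m * (\<Sum>m'\<in>M'. if m + m' = v then Poly_Mapping.lookup h m' else 0))"
    by (rule Sum_any.expand_superset) (use assms in \<open>auto simp: in_keys_iff dest!: mult_not_zero\<close>)
  finally show ?thesis
    by (auto simp: sum_distrib_left intro!: sum.cong)
qed

definition poly_of_coeffs :: "('v \<Rightarrow> nat) set \<Rightarrow> (('v \<Rightarrow> nat) \<Rightarrow> complex) \<Rightarrow> ('v \<Rightarrow>\<^sub>0 nat) \<Rightarrow>\<^sub>0 complex" where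
  "poly_of_coeffs S lam =
    Abs_poly_mapping (\<lambda>E. if Poly_Mapping.lookup E \<in> S then lam (Poly_Mapping.lookup E) else 0)"

lemma eval_coord_poly_poly_of_coeffs:
  assumes "finite S" "finite M" "\<And>\<alpha> m. \<alpha> \<in> S \<Longrightarrow> m \<notin> M \<Longrightarrow> \<alpha> m = 0"
  shows "eval_coord_poly (poly_of_coeffs S lam) c = (\<Sum>\<alpha>\<in>S. lam \<alpha> * (\<Prod>v\<in>M. c v ^ \<alpha> v))"
proof -
  define f where "f E = (if Poly_Mapping.lookup E \<in> S then lam (Poly_Mapping.lookup E) else 0)" for E
  have lookup_Abs: "Poly_Mapping.lookup (Abs_poly_mapping \<alpha>) = \<alpha>" if "\<alpha> \<in> S" for \<alpha>
    using assms(3)[OF that] finite_subset[OF _ assms(2)] by (metis (mono_tags) lookup_Abs_poly_mapping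
        mem_Collect_eq subsetI)
  have supp_f: "{E. f E \<noteq> 0} \<subseteq> Abs_poly_mapping ` S"
    by (auto simp: f_def split: if_splits intro!: image_eqI[of _ Abs_poly_mapping])
  have lookup_P: "Poly_Mapping.lookup (poly_of_coeffs S lam) = f"
    unfolding poly_of_coeffs_def f_def[symmetric]
    using finite_subset[OF supp_f finite_imageI[OF assms(1)]] by simp
  have "inj_on Abs_poly_mapping S"
    by (metis inj_onI lookup_Abs)
  have "eval_coord_poly (poly_of_coeffs S lam) c
      = (\<Sum>E\<in>Abs_poly_mapping ` S. f E * (\<Prod>v\<in>Poly_Mapping.keys E. c v ^ Poly_Mapping.lookup E v))"
    unfolding eval_coord_poly_def lookup_P
    by (rule sum.mono_neutral_left) (use assms(1) supp_f in \<open>auto simp: in_keys_iff lookup_P\<close>)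
  also have "\<dots> = (\<Sum>\<alpha>\<in>S. lam \<alpha> * (\<Prod>v\<in>Poly_Mapping.keys (Abs_poly_mapping \<alpha>). c v ^ \<alpha> v))"
    using \<open>inj_on Abs_poly_mapping S\<close> by (simp add: sum.reindex f_def lookup_Abs)
  also have "\<dots> = (\<Sum>\<alpha>\<in>S. lam \<alpha> * (\<Prod>v\<in>M. c v ^ \<alpha> v))"
  proof (rule sum.cong[OF refl])
    fix \<alpha> assume "\<alpha> \<in> S"
    then have "Poly_Mapping.keys (Abs_poly_mapping \<alpha>) \<subseteq> M"
      using assms(3) by (metis in_keys_iff lookup_Abs subsetI)
    then have "(\<Prod>v\<in>Poly_Mapping.keys (Abs_poly_mapping \<alpha>). c v ^ \<alpha> v) = (\<Prod>v\<in>M. c v ^ \<alpha> v)"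
      using assms(2) \<open>\<alpha> \<in> S\<close> by (intro prod.mono_neutral_left) (auto simp: in_keys_iff lookup_Abs)
    then show "lam \<alpha> * (\<Prod>v\<in>Poly_Mapping.keys (Abs_poly_mapping \<alpha>). c v ^ \<alpha> v)
        = lam \<alpha> * (\<Prod>v\<in>M. c v ^ \<alpha> v)"
      by simp
  qed
  finally show ?thesis .
qed

lemma eval_coord_poly_poly_of_deg_exps:
  assumes "finite M"
  shows "eval_coord_poly (poly_of_coeffs (deg_exps M e) lam) c
    = (\<Sum>\<alpha>\<in>deg_exps M e. lam \<alpha> * (\<Prod>v\<in>M. c v ^ \<alpha> v))"
  using assms by (intro eval_coord_poly_poly_of_coeffs finite_deg_exps) (auto simp: deg_exps_def)

lemma exists_section_eval_neq_0:
  assumes "\<forall>i<k. 0 \<le> d i" "\<exists>\<alpha>\<in>deg_exps (multideg_monos n k d) e. lam \<alpha> \<noteq> 0"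
  shows "\<exists>u\<in>sections n k d.
    eval_coord_poly (poly_of_coeffs (deg_exps (multideg_monos n k d) e) lam) (Poly_Mapping.lookup u) \<noteq> 0"
proof -
  let ?M = "multideg_monos n k d"
  have fin: "finite ?M"
    using assms(1) by (rule finite_multideg_monos)
  obtain c where c: "(\<Sum>\<alpha>\<in>deg_exps ?M e. lam \<alpha> * (\<Prod>v\<in>?M. c v ^ \<alpha> v)) \<noteq> 0"
    using coeffs_eq_0_if_poly_fun_eq_0[OF fin finite_deg_exps[OF fin] inj_on_restrict_deg_exps]
      assms(2) by blast
  define u where "u = (\<Sum>v\<in>?M. Poly_Mapping.single v (c v))"
  have "u \<in> sections n k d"
    unfolding u_def sections_iff_keys by (rule keys_sum_single_subset)
  moreover have "(\<Prod>v\<in>?M. Poly_Mapping.lookup u v ^ \<alpha> v) = (\<Prod>v\<in>?M. c v ^ \<alpha> v)" for \<alpha>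
    using fin by (intro prod.cong refl) (simp add: u_def lookup_sum lookup_single when_def)
  ultimately show ?thesis
    using c by (intro bexI[of _ u]) (simp_all add: eval_coord_poly_poly_of_deg_exps[OF fin])
qed

lemma restrict_in_split_degs:
  "\<forall>i<k. 0 \<le> a i \<and> a i \<le> d i \<Longrightarrow> nontrivial_deg k a \<Longrightarrow> nontrivial_deg k (\<lambda>i. d i - a i)
    \<Longrightarrow> restrict a {..<k} \<in> split_degs k d"
  by (auto simp: split_degs_def nontrivial_deg_def)

lemma product_of_split_type_if_strength_one:
  assumes "strength_decomp n k d u 1"
  shows "u = 0 \<or> (\<exists>a\<in>split_degs k d. \<exists>x y. u = x * y \<and> Poly_Mapping.keys x \<subseteq> multideg_monos n k a
    \<and> Poly_Mapping.keys y \<subseteq> multideg_monos n k (\<lambda>i. d i - a i))"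
proof -
  obtain a x y where nontrivial: "nontrivial_deg k a" "nontrivial_deg k (\<lambda>i. d i - a i)"
    and x: "Poly_Mapping.keys x \<subseteq> multideg_monos n k a"
    and y: "Poly_Mapping.keys y \<subseteq> multideg_monos n k (\<lambda>i. d i - a i)" and u: "u = x * y"
    using assms by (auto simp: strength_decomp_def sections_iff_keys)
  show ?thesis
  proof (cases "\<forall>i<k. 0 \<le> a i \<and> a i \<le> d i")
    case True
    let ?a = "restrict a {..<k}"
    have "multideg_monos n k ?a = multideg_monos n k a"
      "multideg_monos n k (\<lambda>i. d i - ?a i) = multideg_monos n k (\<lambda>i. d i - a i)"
      by (rule multideg_monos_cong; simp)+
    moreover have "?a \<in> split_degs k d"
      using True nontrivial by (rule restrict_in_split_degs)
    ultimately show ?thesis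
      using x y u by metis
  next
    case False
    then obtain i where "i < k" "a i < 0 \<or> d i - a i < 0"
      by force
    then have "x = 0 \<or> y = 0"
      using x y multideg_monos_eq_empty[of i k a n] multideg_monos_eq_empty[of i k "\<lambda>i. d i - a i" n]
      by auto
    with u show ?thesis
      by auto
  qed
qed

lemma bilinear_maps_multideg_monos:
  assumes "2 \<le> k" "\<forall>i<k. 1 \<le> n i" "\<forall>i<k. 1 \<le> d i"
  shows "bilinear_maps (multideg_monos n k d) (split_degs k d) (multideg_monos n k)
    (\<lambda>a. multideg_monos n k (\<lambda>i. d i - a i))"
proof
  have d_nonneg: "\<forall>i<k. 0 \<le> d i"
    using assms(3) by force
  have split_nonneg: "\<forall>i<k. 0 \<le> a i" "\<forall>i<k. 0 \<le> d i - a i" if "a \<in> split_degs k d" for a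
    using that by (auto simp: split_degs_def PiE_iff)
  show "finite (multideg_monos n k d)" "finite (split_degs k d)"
    using d_nonneg by (simp_all add: finite_multideg_monos finite_split_degs)
  show "2 \<le> card (multideg_monos n k d)"
    using assms(1,2) assms(3)[rule_format, of 0]
    by (intro two_le_card_multideg_monos[OF _ _ d_nonneg, of 0]) auto
  show "0 < card (multideg_monos n k a)" "0 < card (multideg_monos n k (\<lambda>i. d i - a i))"
    if "a \<in> split_degs k d" for a
    using split_nonneg[OF that] by (simp_all add: card_multideg_monos_pos)
  show "card (multideg_monos n k a) + card (multideg_monos n k (\<lambda>i. d i - a i))
      \<le> card (multideg_monos n k d)" if "a \<in> split_degs k d" for a
    using assms that by (rule card_multideg_monos_split_le)
qed

lemma exists_hypersurface_containing_products:
  assumes "2 \<le> k" "\<forall>i<k. 1 \<le> n i" "\<forall>i<k. 1 \<le> d i"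
  obtains P where "\<exists>u0\<in>sections n k d. eval_coord_poly P (Poly_Mapping.lookup u0) \<noteq> 0"
    and "\<And>u. strength_decomp n k d u 1 \<Longrightarrow> eval_coord_poly P (Poly_Mapping.lookup u) = 0"
proof -
  let ?M = "multideg_monos n k d"
  interpret bilinear_maps ?M "split_degs k d" "multideg_monos n k"
    "\<lambda>a. multideg_monos n k (\<lambda>i. d i - a i)" "\<lambda>a v m m'. if m + m' = v then 1 else 0"
    by (rule bilinear_maps_multideg_monos[OF assms])
  obtain e lam where nontrivial: "\<exists>\<alpha>\<in>deg_exps ?M e. lam \<alpha> \<noteq> 0"
    and vanish: "\<And>a G H. a \<in> split_degs k d \<Longrightarrow>
      (\<Sum>\<alpha>\<in>deg_exps ?M e. lam \<alpha> * (\<Prod>v\<in>?M. bilinear_map a G H v ^ \<alpha> v)) = 0"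
    by (fact exists_form_vanishing_on_images)
  define P where "P = poly_of_coeffs (deg_exps ?M e) lam"
  have vanish_product: "eval_coord_poly P (Poly_Mapping.lookup (x * y)) = 0"
    if "a \<in> split_degs k d" "Poly_Mapping.keys x \<subseteq> multideg_monos n k a"
      "Poly_Mapping.keys y \<subseteq> multideg_monos n k (\<lambda>i. d i - a i)" for a x y
  proof -
    have "Poly_Mapping.lookup (x * y) v = bilinear_map a (Poly_Mapping.lookup x) (Poly_Mapping.lookup y) v"
      for v
      unfolding bilinear_map_def
      using lookup_mult_eq_sum[OF finite_A[OF that(1)] finite_B[OF that(1)] that(2,3)] .
    then show ?thesis
      using vanish[OF that(1)] by (simp add: P_def eval_coord_poly_poly_of_deg_exps[OF finite_V])
  qed
  have "restrict (deg_unit 0) {..<k} \<in> split_degs k d"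
    using assms(1,3) nontrivial_deg_unit[OF assms(1), of d]
    by (intro restrict_in_split_degs) (auto simp: deg_unit_def)
  from vanish_product[OF this, of 0 0] have vanish_0: "eval_coord_poly P (Poly_Mapping.lookup 0) = 0"
    by simp
  show ?thesis
  proof (rule that)
    show "\<exists>u0\<in>sections n k d. eval_coord_poly P (Poly_Mapping.lookup u0) \<noteq> 0"
      unfolding P_def using assms(3) nontrivial by (intro exists_section_eval_neq_0) force+
    show "eval_coord_poly P (Poly_Mapping.lookup u) = 0" if "strength_decomp n k d u 1" for u
      using product_of_split_type_if_strength_one[OF that] vanish_product vanish_0 by blast
  qed
qed

theorem proposition5p1:
  fixes k :: nat and n :: "nat \<Rightarrow> nat" and d :: "nat \<Rightarrow> int"
  assumes "k \<ge> 2"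
    and "\<forall>i<k. n i \<ge> 1"
    and "n 0 = 1"
    and "\<forall>i<k. d i \<ge> 1"
  shows "(\<forall>u \<in> sections n k d. u \<noteq> 0 \<longrightarrow> strength n k d u \<le> 2)
    \<and> (\<exists>P. (\<exists>u0 \<in> sections n k d. eval_coord_poly P (Poly_Mapping.lookup u0) \<noteq> 0)
          \<and> (\<forall>u \<in> sections n k d. eval_coord_poly P (Poly_Mapping.lookup u) \<noteq> 0 \<longrightarrow> strength n k d u = 2))"
proof -
  obtain P where nonvanishing: "\<exists>u0\<in>sections n k d. eval_coord_poly P (Poly_Mapping.lookup u0) \<noteq> 0"
    and vanishing: "\<And>u. strength_decomp n k d u 1 \<Longrightarrow> eval_coord_poly P (Poly_Mapping.lookup u) = 0"
    using exists_hypersurface_containing_products assms(1,2,4) by blast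
  have le_2: "strength n k d u \<le> 2" if "u \<in> sections n k d" for u
    using strength_le[OF strength_decomp_two[OF assms(1,3,4) that]] by (simp add: numeral_eq_enat)
  have "strength n k d u = 2" if "u \<in> sections n k d" "eval_coord_poly P (Poly_Mapping.lookup u) \<noteq> 0" for u
    using le_2[OF that(1)] two_le_strength vanishing that(2) by (metis order_antisym)
  with le_2 nonvanishing show ?thesis
    by blast
qed

end
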